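(* Assume the univalence axiom. Let $A\xrightarrow{i}E\xrightarrow{p}B$ be a short exact sequence of abelian groups, $G$ an abelian group, and $G\to F\to E$ a short exact sequence. Suppose given path data $i^*(F)=\mathrm{pt}$, i.e. an isomorphism $\psi: G\oplus A\cong i^*(F)$ between the middle groups respecting the inclusions of $G$ and the projections to $A$. Let $F/A$ denote the cokernel of the composite $A\to G\oplus A\xrightarrow{\psi} i^*(F)\to F$. Then the composite $G\to F\to F/A$ and the map $F/A\to B$ induced (by the universal property of the cokernel) from $F\to E\xrightarrow{p}B$ form a short exact sequence $G\to F/A\to B$.
   Context: Short exact sequence $X\xrightarrow{j}M\xrightarrow{q}Y$: $j$ injective, $q$ surjective, $q\circ j=0$, and $X\to\ker q$ surjective. For $g:Y'\to Y$, the pullback $g^*(M)$ is the short exact sequence $X\to M\times_Y Y'\to Y'$ with middle group $\{(m,y')\mid q(m)=g(y')\}$; in particular $i^*(F)$ is the sequence $G\to F\times_E A\to A$. The trivial sequence $\mathrm{pt}$ from $G$ to $A$ is $G\to G\oplus A\to A$. *)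

theory Defs
  imports "HOL-Algebra.Algebra"
begin

definition ses :: "'x monoid \<Rightarrow> 'm monoid \<Rightarrow> 'y monoid \<Rightarrow> ('x \<Rightarrow> 'm) \<Rightarrow> ('m \<Rightarrow> 'y) \<Rightarrow> bool" where
  "ses K M Y j q \<longleftrightarrow>
     comm_group K \<and> comm_group M \<and> comm_group Y \<and>
     j \<in> hom K M \<and> q \<in> hom M Y \<and>
     inj_on j (carrier K) \<and> q ` carrier M = carrier Y \<and>
     (\<forall>x \<in> carrier K. q (j x) = one Y) \<and>
     kernel M Y q \<subseteq> j ` carrier K"

text \<open>Middle group of the pullback g^*(M) of q : M \<rightarrow> Y along g : Y' \<rightarrow> Y:
  the subgroup {(m,y'). q m = g y'} of M \<times> Y'.\<close>

definition pullback_grp :: "'m monoid \<Rightarrow> 'z monoid \<Rightarrow> ('m \<Rightarrow> 'y) \<Rightarrow> ('z \<Rightarrow> 'y) \<Rightarrow> ('m \<times> 'z) monoid" where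
  "pullback_grp M Y' q g =
     (M \<times>\<times> Y') \<lparr>carrier := {(m, y'). m \<in> carrier M \<and> y' \<in> carrier Y' \<and> q m = g y'}\<rparr>"

end

theory Submission
  imports Defs
begin

text \<open>The isomorphism \<open>\<psi>\<close> restricts to a homomorphic section \<open>h : A \<rightarrow> F\<close> over \<open>i\<close>, i.e.
  \<open>qF \<circ> h = i\<close>; put \<open>H = h(A)\<close>. Since \<open>qF\<close> kills \<open>jF(G)\<close> and is injective on \<open>H\<close>,
  the subgroups \<open>jF(G)\<close> and \<open>H\<close> meet trivially, so \<open>G \<rightarrow> F/H\<close> stays injective. If
  \<open>p (qF x) = 1\<close> then \<open>qF x = i a\<close> for some \<open>a\<close>, and \<open>h(a)\<inverse> x\<close> lies in \<open>ker qF = jF(G)\<close>;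
  hence \<open>ker (p \<circ> qF) = H \<cdot> jF(G)\<close>, which is exactness of \<open>G \<rightarrow> F/H \<rightarrow> B\<close> in the middle.\<close>

lemma carrier_pullback_grp:
  "carrier (pullback_grp M Y' q g) = {(m, y'). m \<in> carrier M \<and> y' \<in> carrier Y' \<and> q m = g y'}"
  by (simp add: pullback_grp_def)

lemma mult_pullback_grp: "x \<otimes>\<^bsub>pullback_grp M Y' q g\<^esub> y = x \<otimes>\<^bsub>M \<times>\<times> Y'\<^esub> y"
  by (simp add: pullback_grp_def)

lemma fst_in_hom_pullback_grp: "fst \<in> hom (pullback_grp M Y' q g) M"
  by (auto intro!: homI simp: carrier_pullback_grp mult_pullback_grp mult_DirProd')

lemma Pair_one_in_hom_DirProd: "monoid G \<Longrightarrow> Pair \<one>\<^bsub>G\<^esub> \<in> hom A (G \<times>\<times> A)"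
  by (auto intro!: homI)

lemma pullback_splitting_hom:
  assumes \<psi>: "\<psi> \<in> hom (G \<times>\<times> A) (pullback_grp F A q i)" and G: "monoid G"
    and \<psi>_snd: "\<forall>a \<in> carrier A. snd (\<psi> (\<one>\<^bsub>G\<^esub>, a)) = a"
  shows "(\<lambda>a. fst (\<psi> (\<one>\<^bsub>G\<^esub>, a))) \<in> hom A F"
    and "a \<in> carrier A \<Longrightarrow> q (fst (\<psi> (\<one>\<^bsub>G\<^esub>, a))) = i a"
proof -
  show "(\<lambda>a. fst (\<psi> (\<one>\<^bsub>G\<^esub>, a))) \<in> hom A F"
    using hom_compose[OF hom_compose[OF Pair_one_in_hom_DirProd[OF G] \<psi>] fst_in_hom_pullback_grp]
    by (simp add: comp_def)
  assume a: "a \<in> carrier A"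
  then have "\<psi> (\<one>\<^bsub>G\<^esub>, a) \<in> carrier (pullback_grp F A q i)"
    using \<psi> G by (auto simp: hom_def Pi_def monoid.one_closed)
  then show "q (fst (\<psi> (\<one>\<^bsub>G\<^esub>, a))) = i a"
    using \<psi>_snd a by (auto simp: carrier_pullback_grp)
qed

lemma ses_FactGroupI:
  assumes F: "comm_group F" and G: "comm_group G" and B: "comm_group B"
    and j: "j \<in> hom G F" "inj_on j (carrier G)"
    and H: "subgroup H F" "j ` carrier G \<inter> H \<subseteq> {\<one>\<^bsub>F\<^esub>}"
    and f: "f \<in> hom F B" "f ` carrier F = carrier B" "\<forall>g \<in> carrier G. f (j g) = \<one>\<^bsub>B\<^esub>"
    and exact: "kernel F B f \<subseteq> H <#>\<^bsub>F\<^esub> j ` carrier G"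
    and \<phi>: "\<phi> \<in> hom (F Mod H) B" "\<forall>x \<in> carrier F. \<phi> (H #>\<^bsub>F\<^esub> x) = f x"
  shows "ses G (F Mod H) B (\<lambda>g. H #>\<^bsub>F\<^esub> j g) \<phi>"
proof -
  interpret F: comm_group F by (rule F)
  interpret G: comm_group G by (rule G)
  interpret B: comm_group B by (rule B)
  interpret j: group_hom G F j by (simp add: group_hom_def group_hom_axioms_def j(1) G.is_group F.is_group)
  interpret N: normal H F using H(1) F.subgroup_imp_normal by blast
  have hom: "(\<lambda>g. H #>\<^bsub>F\<^esub> j g) \<in> hom G (F Mod H)"
    using hom_compose[OF j(1) N.r_coset_hom_Mod] by (simp add: comp_def)
  have inj: "inj_on (\<lambda>g. H #>\<^bsub>F\<^esub> j g) (carrier G)"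
  proof (subst inj_on_one_iff'[OF hom G.is_group N.factorgroup_is_group], intro allI impI)
    fix g assume g: "g \<in> carrier G" and "H #>\<^bsub>F\<^esub> j g = \<one>\<^bsub>F Mod H\<^esub>"
    then have "j g \<in> H" using F.coset_join1 H(1) by simp
    then have "j g = \<one>\<^bsub>F\<^esub>" using H(2) g by blast
    then show "g = \<one>\<^bsub>G\<^esub>" using j(2) g j.inj_on_one_iff by blast
  qed
  have surj: "\<phi> ` carrier (F Mod H) = carrier B"
    using f(2) \<phi>(2) by (simp add: carrier_FactGroup image_image cong: image_cong)
  have ker: "kernel (F Mod H) B \<phi> \<subseteq> (\<lambda>g. H #>\<^bsub>F\<^esub> j g) ` carrier G"
  proof
    fix C assume "C \<in> kernel (F Mod H) B \<phi>"
    then obtain x where x: "x \<in> carrier F" "C = H #>\<^bsub>F\<^esub> x" "f x = \<one>\<^bsub>B\<^esub>"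
      using \<phi>(2) by (auto simp: kernel_def carrier_FactGroup)
    then have "x \<in> H <#>\<^bsub>F\<^esub> j ` carrier G" using exact by (auto simp: kernel_def)
    then obtain k g where kg: "k \<in> H" "g \<in> carrier G" "x = k \<otimes>\<^bsub>F\<^esub> j g"
      by (auto simp: set_mult_def)
    have "H #>\<^bsub>F\<^esub> x = (H #>\<^bsub>F\<^esub> k) #>\<^bsub>F\<^esub> j g"
      using kg N.subset by (simp add: F.coset_mult_assoc subsetD)
    also have "\<dots> = H #>\<^bsub>F\<^esub> j g"
      using kg(1) H(1) N.subset by (simp add: F.coset_join2 subsetD)
    finally show "C \<in> (\<lambda>g. H #>\<^bsub>F\<^esub> j g) ` carrier G" using x(2) kg(2) by blast
  qed
  show ?thesis
    unfolding ses_def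
    using G B F.abelian_FactGroup[OF H(1)] hom \<phi>(1) inj surj \<phi>(2) f(3) ker by simp
qed

lemma
  assumes sesE: "ses A E B i p" and sesF: "ses G F E j q"
    and h: "h \<in> hom A F" "\<forall>a \<in> carrier A. q (h a) = i a"
  shows FactGroup_splitting_induced_hom:
      "\<exists>\<phi>. \<phi> \<in> hom (F Mod h ` carrier A) B \<and> (\<forall>x \<in> carrier F. \<phi> (h ` carrier A #>\<^bsub>F\<^esub> x) = p (q x))"
    and ses_FactGroup_splitting:
      "\<lbrakk>\<phi> \<in> hom (F Mod h ` carrier A) B; \<forall>x \<in> carrier F. \<phi> (h ` carrier A #>\<^bsub>F\<^esub> x) = p (q x)\<rbrakk>
       \<Longrightarrow> ses G (F Mod h ` carrier A) B (\<lambda>g. h ` carrier A #>\<^bsub>F\<^esub> j g) \<phi>"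
proof -
  interpret A: comm_group A using sesE by (simp add: ses_def)
  interpret E: comm_group E using sesE by (simp add: ses_def)
  interpret B: comm_group B using sesE by (simp add: ses_def)
  interpret G: comm_group G using sesF by (simp add: ses_def)
  interpret F: comm_group F using sesF by (simp add: ses_def)
  interpret i: group_hom A E i using sesE by (simp add: ses_def group_hom_def group_hom_axioms_def)
  interpret p: group_hom E B p using sesE by (simp add: ses_def group_hom_def group_hom_axioms_def)
  interpret j: group_hom G F j using sesF by (simp add: ses_def group_hom_def group_hom_axioms_def)
  interpret q: group_hom F E q using sesF by (simp add: ses_def group_hom_def group_hom_axioms_def)
  interpret h: group_hom A F h using h(1) by (simp add: group_hom_def group_hom_axioms_def)
  define H where "H = h ` carrier A"
  have H: "subgroup H F" unfolding H_def by (rule h.img_is_subgroup)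
  have pq: "(\<lambda>x. p (q x)) \<in> hom F B" using hom_compose[OF q.homh p.homh] by (simp add: comp_def)
  interpret pq: group_hom F B "\<lambda>x. p (q x)" using pq by (simp add: group_hom_def group_hom_axioms_def)
  have pi: "p (i a) = \<one>\<^bsub>B\<^esub>" if "a \<in> carrier A" for a using sesE that by (simp add: ses_def)
  have H_ker: "H \<subseteq> kernel F B (\<lambda>x. p (q x))"
    using h(2) pi by (auto simp: H_def kernel_def)
  then show "\<exists>\<phi>. \<phi> \<in> hom (F Mod h ` carrier A) B \<and> (\<forall>x \<in> carrier F. \<phi> (h ` carrier A #>\<^bsub>F\<^esub> x) = p (q x))"
    using pq.FactGroup_universal_kernel[OF F.subgroup_imp_normal[OF H]] unfolding H_def by metis
  have disjoint: "j ` carrier G \<inter> H \<subseteq> {\<one>\<^bsub>F\<^esub>}"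
  proof
    fix x assume "x \<in> j ` carrier G \<inter> H"
    then obtain g a where ga: "g \<in> carrier G" "a \<in> carrier A" "x = j g" "x = h a"
      by (auto simp: H_def)
    then have "i a = \<one>\<^bsub>E\<^esub>" using h(2) sesF by (metis ses_def)
    then have "a = \<one>\<^bsub>A\<^esub>" using ga(2) sesE i.inj_on_one_iff by (simp add: ses_def)
    then show "x \<in> {\<one>\<^bsub>F\<^esub>}" using ga by simp
  qed
  have exact: "kernel F B (\<lambda>x. p (q x)) \<subseteq> H <#>\<^bsub>F\<^esub> j ` carrier G"
  proof
    fix x assume "x \<in> kernel F B (\<lambda>x. p (q x))"
    then have x: "x \<in> carrier F" "q x \<in> kernel E B p" by (auto simp: kernel_def)
    then obtain a where a: "a \<in> carrier A" "q x = i a" using sesE by (auto simp: ses_def)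
    have "inv\<^bsub>F\<^esub> h a \<otimes>\<^bsub>F\<^esub> x \<in> kernel F E q"
      using x(1) a h(2) by (simp add: kernel_def)
    then obtain g where g: "g \<in> carrier G" "inv\<^bsub>F\<^esub> h a \<otimes>\<^bsub>F\<^esub> x = j g"
      using sesF by (auto simp: ses_def)
    then have "x = h a \<otimes>\<^bsub>F\<^esub> j g" using x(1) a(1) F.inv_solve_left' by simp
    then show "x \<in> H <#>\<^bsub>F\<^esub> j ` carrier G" using a(1) g(1) by (auto simp: H_def set_mult_def)
  qed
  have surj: "(\<lambda>x. p (q x)) ` carrier F = carrier B"
    using sesE sesF by (simp add: ses_def flip: image_image)
  show "ses G (F Mod h ` carrier A) B (\<lambda>g. h ` carrier A #>\<^bsub>F\<^esub> j g) \<phi>"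
    if "\<phi> \<in> hom (F Mod h ` carrier A) B" "\<forall>x \<in> carrier F. \<phi> (h ` carrier A #>\<^bsub>F\<^esub> x) = p (q x)"
    using ses_FactGroupI[OF F.comm_group_axioms G.comm_group_axioms B.comm_group_axioms
        j.homh _ H disjoint pq surj _ exact] that sesF
    by (simp add: H_def ses_def)
qed

theorem lemma14:
  fixes A :: "'a monoid" and E :: "'e monoid" and B :: "'b monoid"
    and G :: "'g monoid" and F :: "'f monoid"
    and i :: "'a \<Rightarrow> 'e" and p :: "'e \<Rightarrow> 'b"
    and jF :: "'g \<Rightarrow> 'f" and qF :: "'f \<Rightarrow> 'e"
    and \<psi> :: "'g \<times> 'a \<Rightarrow> 'f \<times> 'a"
  assumes sesE: "ses A E B i p"
    and sesF: "ses G F E jF qF"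
    and psi_iso: "\<psi> \<in> iso (G \<times>\<times> A) (pullback_grp F A qF i)"
    and psi_incl: "\<forall>g \<in> carrier G. \<psi> (g, one A) = (jF g, one A)"
    and psi_proj: "\<forall>g \<in> carrier G. \<forall>a \<in> carrier A. snd (\<psi> (g, a)) = a"
  shows "let H = (\<lambda>a. fst (\<psi> (one G, a))) ` carrier A in
           (\<exists>\<phi>. \<phi> \<in> hom (F Mod H) B \<and> (\<forall>x \<in> carrier F. \<phi> (r_coset F H x) = p (qF x)))
         \<and> (\<forall>\<phi>. \<phi> \<in> hom (F Mod H) B \<and> (\<forall>x \<in> carrier F. \<phi> (r_coset F H x) = p (qF x))
               \<longrightarrow> ses G (F Mod H) B (\<lambda>g. r_coset F H (jF g)) \<phi>)"
proof -
  \<comment> \<open>Only the splitting \<open>a \<mapsto> fst (\<psi> (\<one>, a))\<close> of \<open>i\<^sup>*(F) \<rightarrow> A\<close> matters.\<close>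
  define h where "h = (\<lambda>a. fst (\<psi> (\<one>\<^bsub>G\<^esub>, a)))"
  have G: "monoid G" using sesF by (simp add: ses_def comm_group_def group_def)
  have \<psi>: "\<psi> \<in> hom (G \<times>\<times> A) (pullback_grp F A qF i)" using psi_iso by (simp add: iso_def)
  have "\<forall>a \<in> carrier A. snd (\<psi> (\<one>\<^bsub>G\<^esub>, a)) = a" using psi_proj G by (simp add: monoid.one_closed)
  then have h: "h \<in> hom A F" "\<forall>a \<in> carrier A. qF (h a) = i a"
    using pullback_splitting_hom[OF \<psi> G] unfolding h_def by auto
  show ?thesis
    unfolding Let_def h_def[symmetric]
    using FactGroup_splitting_induced_hom[OF sesE sesF h] ses_FactGroup_splitting[OF sesE sesF h] by blast
qed

end
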